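(* Let $m,n\in\mathbb N$ with $m\ge n\ge 1$, and let $\beta>1$ be the real zero of $x^3-mx^2-mx-n$ that exceeds $1$. Then $\mathrm{Fin}(-\beta)$ is a ring if and only if $n=m$. (Equivalently, $\mathrm{Fin}(-\beta)=\mathbb Z[\beta]$ if and only if $n=m$.)
   Context: Fix a real number $\beta>1$ and set $\ell=\frac{-\beta}{\beta+1}$. Define $T_{-\beta}:[\ell,\ell+1)\to[\ell,\ell+1)$ by $T_{-\beta}(x)=-\beta x-\lfloor -\beta x-\ell\rfloor$. For $x\in[\ell,\ell+1)$, the $(-\beta)$-expansion of $x$ is $d_{-\beta}(x)=x_1x_2\cdots$ with $x_i=\lfloor -\beta\, T_{-\beta}^{i-1}(x)-\ell\rfloor\in\{0,\dots,\lfloor\beta\rfloor\}$. For arbitrary $x\in\mathbb R$, let $k\ge0$ be minimal with $x/(-\beta)^k\in(\ell,\ell+1)$ and let $d_{-\beta}(x/(-\beta)^k)=x_1x_2\cdots$. The $(-\beta)$-expansion of $x$ is $x_1\cdots x_k\bullet x_{k+1}x_{k+2}\cdots$ if $k\ge1$, and $0\bullet x_1x_2\cdots$ if $k=0$. It represents $x=\sum_i x_i'(-\beta)^i$ in the usual positional way. $\mathbb Z_{-\beta}$ is the set of reals whose $(-\beta)$-expansion has only zeros after $\bullet$. $\mathrm{Fin}(-\beta)=\bigcup_{i\ge0}(-\beta)^{-i}\mathbb Z_{-\beta}$ is the set of reals whose $(-\beta)$-expansion has only finitely many nonzero digits. The question is whether this set is closed under addition, negation and multiplication, i.e. whether it is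 a subring of $\mathbb R$. *)

theory Defs
  imports Complex_Main
begin

text \<open>Left endpoint ell = -beta/(beta+1) of the interval [ell, ell+1).\<close>
definition nb_ell :: "real \<Rightarrow> real" where
  "nb_ell \<beta> = - \<beta> / (\<beta> + 1)"

definition nb_T :: "real \<Rightarrow> real \<Rightarrow> real" where
  "nb_T \<beta> x = - \<beta> * x - of_int \<lfloor>- \<beta> * x - nb_ell \<beta>\<rfloor>"

definition nb_digit :: "real \<Rightarrow> real \<Rightarrow> nat \<Rightarrow> int" where
  "nb_digit \<beta> x i = \<lfloor>- \<beta> * ((nb_T \<beta> ^^ (i - 1)) x) - nb_ell \<beta>\<rfloor>"

definition nb_k :: "real \<Rightarrow> real \<Rightarrow> nat" where
  "nb_k \<beta> x = (LEAST k. x / (- \<beta>) ^ k \<in> {nb_ell \<beta> <..< nb_ell \<beta> + 1})"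

text \<open>Z_{-beta}: reals whose (-beta)-expansion x_1...x_k . x_{k+1}... has only zeros
  after the radix point, i.e. x_i = 0 for all i > k (digits of x/(-beta)^k).\<close>
definition Z_nb :: "real \<Rightarrow> real set" where
  "Z_nb \<beta> = {x. \<forall>i > nb_k \<beta> x. nb_digit \<beta> (x / (- \<beta>) ^ nb_k \<beta> x) i = 0}"

definition Fin_nb :: "real \<Rightarrow> real set" where
  "Fin_nb \<beta> = (\<Union>i::nat. (\<lambda>z. inverse ((- \<beta>) ^ i) * z) ` Z_nb \<beta>)"

definition is_ring_set :: "real set \<Rightarrow> bool" where
  "is_ring_set S \<longleftrightarrow> (\<forall>x\<in>S. \<forall>y\<in>S. x + y \<in> S \<and> x * y \<in> S) \<and> (\<forall>x\<in>S. - x \<in> S)"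

end

theory Submission
  imports Defs
begin

text \<open>
  For \<open>\<beta> > 1\<close> a real \<open>x\<close> has a finite \<open>(-\<beta>)\<close>-expansion exactly when the orbit of
  \<open>x / (-\<beta>)\<^sup>l\<close> under \<open>T\<^sub>-\<^sub>\<beta>\<close> reaches \<open>0\<close>, for any \<open>l\<close> with \<open>x / (-\<beta>)\<^sup>l\<close> in the open interval
  \<open>(\<ell>, \<ell> + 1)\<close>.

  If \<open>n = m\<close>, then \<open>Z\<^sub>-\<^sub>\<beta> \<subseteq> \<int>[\<beta>]\<close> because \<open>(-\<beta>)\<^sup>j y - T\<^sup>j y \<in> \<int>[\<beta>]\<close>. Conversely, writing an
  element of \<open>\<int>[\<beta>]\<close> as \<open>s - (\<beta> - m) r + (m/\<beta>) q\<close> with integers \<open>s, r, q\<close>, the map \<open>T\<^sub>-\<^sub>\<beta>\<close> acts as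
  a shift \<open>(s, r) \<mapsto> (s', s)\<close> of a two-dimensional shift radix system. Along this shift a
  hexagonal norm \<open>max |x| |y| |x - y|\<close>, refined by the position on the boundary of the
  hexagon, strictly decreases until the origin is reached. Hence \<open>Fin(-\<beta>)\<close> is the union of
  the sets \<open>(-\<beta>)\<^sup>-\<^sup>i \<int>[\<beta>]\<close>, which is a ring.

  If \<open>n < m\<close>, then \<open>\<beta> > m \<ge> 2\<close> and \<open>1\<close> has the finite expansion \<open>1\<bullet>\<close>, while the orbit of
  \<open>-1/\<beta>\<^sup>2\<close> reaches the nonzero fixed point \<open>-(n + 1)/(\<beta> + 1)\<close> after three steps, so \<open>-1\<close> has no
  finite expansion.
\<close>

section \<open>The \<open>(-\<beta>)\<close>-transformation and finite expansions\<close>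

lemma nb_ell_add_1: "\<beta> > 1 \<Longrightarrow> nb_ell \<beta> + 1 = 1 / (\<beta> + 1)"
  unfolding nb_ell_def by (simp add: field_simps)

lemma nb_ell_bounds: "\<beta> > 1 \<Longrightarrow> -1 < nb_ell \<beta> \<and> nb_ell \<beta> < -1/2"
  unfolding nb_ell_def by (auto simp: field_simps)

lemma floor_minus_nb_ell: "\<beta> > 1 \<Longrightarrow> \<lfloor>- nb_ell \<beta>\<rfloor> = 0"
  unfolding nb_ell_def by (simp add: floor_eq_iff field_simps)

lemma nb_T_bounds: "nb_ell \<beta> \<le> nb_T \<beta> x \<and> nb_T \<beta> x < nb_ell \<beta> + 1"
  unfolding nb_T_def by linarith

lemma nb_T_eq_iff_floor:
  "nb_T \<beta> x = - \<beta> * x - of_int k \<longleftrightarrow> \<lfloor>- \<beta> * x - nb_ell \<beta>\<rfloor> = k"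
  unfolding nb_T_def by auto

lemma nb_T_0: "\<beta> > 1 \<Longrightarrow> nb_T \<beta> 0 = 0"
  unfolding nb_T_def by (simp add: floor_minus_nb_ell)

lemma funpow_nb_T_0: "\<beta> > 1 \<Longrightarrow> (nb_T \<beta> ^^ j) 0 = 0"
  by (induction j) (simp_all add: nb_T_0)

lemma divide_minus_beta_mem:
  assumes "\<beta> > 1" and "v \<in> {nb_ell \<beta> <..< nb_ell \<beta> + 1}"
  shows "v / - \<beta> \<in> {nb_ell \<beta> <..< nb_ell \<beta> + 1}"
proof -
  have v: "- (\<beta> / (\<beta> + 1)) < v" "v < 1 / (\<beta> + 1)"
    using assms nb_ell_add_1[OF assms(1)] by (auto simp: nb_ell_def)
  have "- v * (\<beta> + 1) < \<beta>"
    using v(1) assms(1) by (simp add: field_simps)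
  then have upper: "v / - \<beta> < 1 / (\<beta> + 1)"
    using assms(1) by (simp add: field_simps)
  have "v * (\<beta> + 1) < 1"
    using v(2) assms(1) by (simp add: field_simps)
  also have "1 < \<beta> * \<beta>"
    by (rule less_1_mult[OF assms(1) assms(1)])
  finally have "- (\<beta> / (\<beta> + 1)) < v / - \<beta>"
    using assms(1) by (simp add: field_simps)
  then show ?thesis
    using upper nb_ell_add_1[OF assms(1)] by (simp add: nb_ell_def)
qed

lemma nb_T_divide_minus_beta:
  assumes "\<beta> > 1" and "v \<in> {nb_ell \<beta> <..< nb_ell \<beta> + 1}"
  shows "nb_T \<beta> (v / - \<beta>) = v"
proof -
  have "\<lfloor>v - nb_ell \<beta>\<rfloor> = 0"
    using assms(2) by (simp add: floor_eq_iff)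
  then show ?thesis
    using assms(1) by (simp add: nb_T_def)
qed

lemma divide_power_minus_beta_mem:
  assumes "\<beta> > 1" and "v \<in> {nb_ell \<beta> <..< nb_ell \<beta> + 1}"
  shows "v / (- \<beta>) ^ j \<in> {nb_ell \<beta> <..< nb_ell \<beta> + 1}"
proof (induction j)
  case (Suc j)
  then show ?case
    using divide_minus_beta_mem[OF assms(1) Suc] by (simp add: field_simps)
qed (use assms in simp)

lemma funpow_nb_T_divide_power:
  assumes "\<beta> > 1" and "v \<in> {nb_ell \<beta> <..< nb_ell \<beta> + 1}"
  shows "(nb_T \<beta> ^^ j) (v / (- \<beta>) ^ j) = v"
proof (induction j)
  case (Suc j)
  have "nb_T \<beta> (v / (- \<beta>) ^ Suc j) = v / (- \<beta>) ^ j"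
    using nb_T_divide_minus_beta[OF assms(1) divide_power_minus_beta_mem[OF assms]]
    by (simp add: field_simps)
  then show ?case
    using Suc by (simp only: funpow_Suc_right o_apply)
qed simp

lemma ex_power_minus_beta_divide_mem:
  assumes "\<beta> > 1"
  shows "\<exists>k. x / (- \<beta>) ^ k \<in> {nb_ell \<beta> <..< nb_ell \<beta> + 1}"
proof -
  obtain k where k: "\<bar>x\<bar> * (\<beta> + 1) < \<beta> ^ k"
    using real_arch_pow assms by blast
  have "\<bar>x / (- \<beta>) ^ k\<bar> = \<bar>x\<bar> / \<beta> ^ k"
    using assms by (simp add: power_abs)
  also have "\<dots> < 1 / (\<beta> + 1)"
    using k assms by (simp add: field_simps)
  finally have "\<bar>x / (- \<beta>) ^ k\<bar> < 1 / (\<beta> + 1)" .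
  moreover have "1 / (\<beta> + 1) \<le> \<beta> / (\<beta> + 1)"
    using assms by (simp add: divide_right_mono)
  ultimately have "x / (- \<beta>) ^ k \<in> {- (\<beta> / (\<beta> + 1)) <..< 1 / (\<beta> + 1)}"
    unfolding abs_less_iff greaterThanLessThan_iff by linarith
  then show ?thesis
    using nb_ell_add_1[OF assms] by (auto simp: nb_ell_def)
qed

lemma nb_k_mem:
  "\<beta> > 1 \<Longrightarrow> x / (- \<beta>) ^ nb_k \<beta> x \<in> {nb_ell \<beta> <..< nb_ell \<beta> + 1}"
  unfolding nb_k_def by (rule LeastI_ex[OF ex_power_minus_beta_divide_mem])

lemma nb_k_le:
  "x / (- \<beta>) ^ k \<in> {nb_ell \<beta> <..< nb_ell \<beta> + 1} \<Longrightarrow> nb_k \<beta> x \<le> k"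
  unfolding nb_k_def by (rule Least_le)

text \<open>For \<open>y \<in> [\<ell>, \<ell> + 1)\<close>: the \<open>(-\<beta>)\<close>-expansion of \<open>y\<close> has only finitely many nonzero digits.\<close>

definition nb_finite_orbit :: "real \<Rightarrow> real \<Rightarrow> bool" where
  "nb_finite_orbit \<beta> y \<longleftrightarrow> (\<exists>N. (nb_T \<beta> ^^ N) y = 0)"

lemma nb_finite_orbit_funpow_iff:
  assumes "\<beta> > 1"
  shows "nb_finite_orbit \<beta> ((nb_T \<beta> ^^ j) y) \<longleftrightarrow> nb_finite_orbit \<beta> y"
proof
  assume "nb_finite_orbit \<beta> ((nb_T \<beta> ^^ j) y)"
  then obtain N where "(nb_T \<beta> ^^ (N + j)) y = 0"
    unfolding nb_finite_orbit_def by (auto simp: funpow_add)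
  then show "nb_finite_orbit \<beta> y"
    unfolding nb_finite_orbit_def by blast
next
  assume "nb_finite_orbit \<beta> y"
  then obtain N where "(nb_T \<beta> ^^ N) y = 0"
    unfolding nb_finite_orbit_def by blast
  then have "(nb_T \<beta> ^^ N) ((nb_T \<beta> ^^ j) y) = 0"
    using funpow_nb_T_0[OF assms] by (metis comp_apply funpow_add add.commute)
  then show "nb_finite_orbit \<beta> ((nb_T \<beta> ^^ j) y)"
    unfolding nb_finite_orbit_def by blast
qed

lemma nb_finite_orbit_divide_power_iff:
  assumes "\<beta> > 1" and "v \<in> {nb_ell \<beta> <..< nb_ell \<beta> + 1}"
  shows "nb_finite_orbit \<beta> (v / (- \<beta>) ^ j) \<longleftrightarrow> nb_finite_orbit \<beta> v"
  using nb_finite_orbit_funpow_iff[OF assms(1), of j "v / (- \<beta>) ^ j"]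
  by (simp add: funpow_nb_T_divide_power[OF assms])

lemma eq_0_if_power_mult_bounded:
  fixes \<beta> w :: real
  assumes "\<beta> > 1" and "\<And>j. \<bar>\<beta> ^ j * w\<bar> < 1"
  shows "w = 0"
proof (rule ccontr)
  assume "w \<noteq> 0"
  obtain j where "1 / \<bar>w\<bar> < \<beta> ^ j"
    using real_arch_pow assms(1) by blast
  then have "1 < \<beta> ^ j * \<bar>w\<bar>"
    using \<open>w \<noteq> 0\<close> by (simp add: field_simps)
  then show False
    using assms(2)[of j] assms(1) by (simp add: abs_mult)
qed

lemma funpow_nb_T_bounds:
  "y \<in> {nb_ell \<beta> ..< nb_ell \<beta> + 1} \<Longrightarrow> (nb_T \<beta> ^^ j) y \<in> {nb_ell \<beta> ..< nb_ell \<beta> + 1}"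
  using nb_T_bounds by (cases j) auto

lemma nb_digits_eq_0_iff:
  assumes "\<beta> > 1" and y: "y \<in> {nb_ell \<beta> ..< nb_ell \<beta> + 1}"
  shows "(\<forall>j. nb_digit \<beta> y (k + Suc j) = 0) \<longleftrightarrow> (nb_T \<beta> ^^ k) y = 0"
proof
  assume digits: "\<forall>j. nb_digit \<beta> y (k + Suc j) = 0"
  define w where "w = (nb_T \<beta> ^^ k) y"
  have orbit: "(nb_T \<beta> ^^ (k + j)) y = (- \<beta>) ^ j * w" for j
  proof (induction j)
    case (Suc j)
    have "nb_T \<beta> ((nb_T \<beta> ^^ (k + j)) y) = - \<beta> * (nb_T \<beta> ^^ (k + j)) y"
      using digits[rule_format, of j] by (simp add: nb_T_def nb_digit_def)
    then show ?case
      using Suc by simp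
  qed (simp add: w_def)
  have "\<bar>(- \<beta>) ^ j * w\<bar> < 1" for j
    using orbit[of j] funpow_nb_T_bounds[OF y, of "k + j"] nb_ell_bounds[OF assms(1)]
    unfolding abs_less_iff by auto
  moreover have "\<bar>(- \<beta>) ^ j * w\<bar> = \<bar>\<beta> ^ j * w\<bar>" for j
    by (simp add: abs_mult power_abs)
  ultimately have "\<bar>\<beta> ^ j * w\<bar> < 1" for j
    by metis
  then show "(nb_T \<beta> ^^ k) y = 0"
    using eq_0_if_power_mult_bounded[OF assms(1)] unfolding w_def by blast
next
  assume "(nb_T \<beta> ^^ k) y = 0"
  then have "(nb_T \<beta> ^^ (k + j)) y = 0" for j
    using funpow_nb_T_0[OF assms(1)] by (metis add.commute funpow_add comp_apply)
  then show "\<forall>j. nb_digit \<beta> y (k + Suc j) = 0"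
    using floor_minus_nb_ell[OF assms(1)] by (simp add: nb_digit_def)
qed

lemma Z_nb_iff_funpow_nb_T_eq_0:
  assumes "\<beta> > 1"
  shows "z \<in> Z_nb \<beta> \<longleftrightarrow> (nb_T \<beta> ^^ nb_k \<beta> z) (z / (- \<beta>) ^ nb_k \<beta> z) = 0"
proof -
  have "z \<in> Z_nb \<beta> \<longleftrightarrow> (\<forall>j. nb_digit \<beta> (z / (- \<beta>) ^ nb_k \<beta> z) (nb_k \<beta> z + Suc j) = 0)"
    unfolding Z_nb_def by (auto simp: less_iff_Suc_add)
  also have "\<dots> \<longleftrightarrow> (nb_T \<beta> ^^ nb_k \<beta> z) (z / (- \<beta>) ^ nb_k \<beta> z) = 0"
    using nb_k_mem[OF assms, of z] by (intro nb_digits_eq_0_iff[OF assms]) simp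
  finally show ?thesis .
qed

lemma Fin_nb_iff: "\<beta> > 1 \<Longrightarrow> x \<in> Fin_nb \<beta> \<longleftrightarrow> (\<exists>i. (- \<beta>) ^ i * x \<in> Z_nb \<beta>)"
proof -
  assume "\<beta> > 1"
  then have "x = inverse ((- \<beta>) ^ i) * z \<longleftrightarrow> z = (- \<beta>) ^ i * x" for i z
    by (auto simp: field_simps)
  then have "x \<in> Fin_nb \<beta> \<longleftrightarrow> (\<exists>i z. z \<in> Z_nb \<beta> \<and> z = (- \<beta>) ^ i * x)"
    unfolding Fin_nb_def by blast
  then show ?thesis
    by blast
qed

lemma nb_finite_orbit_if_mem_Fin_nb:
  assumes "\<beta> > 1" and y: "x / (- \<beta>) ^ l \<in> {nb_ell \<beta> <..< nb_ell \<beta> + 1}"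
    and "x \<in> Fin_nb \<beta>"
  shows "nb_finite_orbit \<beta> (x / (- \<beta>) ^ l)"
proof -
  obtain i where z: "(- \<beta>) ^ i * x \<in> Z_nb \<beta>"
    using assms(3) Fin_nb_iff[OF assms(1)] by blast
  define z where "z = (- \<beta>) ^ i * x"
  define k where "k = nb_k \<beta> z"
  define v where "v = z / (- \<beta>) ^ k"
  have v: "v \<in> {nb_ell \<beta> <..< nb_ell \<beta> + 1}"
    unfolding v_def k_def by (rule nb_k_mem[OF assms(1)])
  have "nb_finite_orbit \<beta> v"
    using z Z_nb_iff_funpow_nb_T_eq_0[OF assms(1)]
    unfolding nb_finite_orbit_def v_def k_def z_def by blast
  moreover have y_eq: "x / (- \<beta>) ^ l = z / (- \<beta>) ^ (i + l)"
    unfolding z_def using assms(1) by (simp add: power_add)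
  ultimately show ?thesis
  proof (cases "k \<le> i + l")
    case True
    then have "x / (- \<beta>) ^ l = v / (- \<beta>) ^ (i + l - k)"
      unfolding y_eq v_def using assms(1) by (simp add: power_add[symmetric])
    then show ?thesis
      using nb_finite_orbit_divide_power_iff[OF assms(1) v] \<open>nb_finite_orbit \<beta> v\<close> by simp
  next
    case False
    then have "v = (x / (- \<beta>) ^ l) / (- \<beta>) ^ (k - (i + l))"
      unfolding y_eq v_def using assms(1) by (simp add: power_add[symmetric])
    then show ?thesis
      using nb_finite_orbit_divide_power_iff[OF assms(1) y] \<open>nb_finite_orbit \<beta> v\<close> by simp
  qed
qed

lemma mem_Fin_nb_if_nb_finite_orbit:
  assumes "\<beta> > 1" and y: "x / (- \<beta>) ^ l \<in> {nb_ell \<beta> <..< nb_ell \<beta> + 1}"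
    and "nb_finite_orbit \<beta> (x / (- \<beta>) ^ l)"
  shows "x \<in> Fin_nb \<beta>"
proof -
  obtain N where N: "(nb_T \<beta> ^^ N) (x / (- \<beta>) ^ l) = 0"
    using assms(3) unfolding nb_finite_orbit_def by blast
  define z where "z = (- \<beta>) ^ N * x"
  define k where "k = nb_k \<beta> z"
  define v where "v = z / (- \<beta>) ^ k"
  have y_eq: "x / (- \<beta>) ^ l = z / (- \<beta>) ^ (l + N)"
    unfolding z_def using assms(1) by (simp add: power_add)
  then have "k \<le> l + N"
    unfolding k_def using y by (intro nb_k_le) simp
  then have "x / (- \<beta>) ^ l = v / (- \<beta>) ^ (l + N - k)"
    unfolding y_eq v_def using assms(1) by (simp add: power_add[symmetric])
  then have "(nb_T \<beta> ^^ (l + N - k)) (x / (- \<beta>) ^ l) = v"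
    using funpow_nb_T_divide_power[OF assms(1) nb_k_mem[OF assms(1)]]
    unfolding v_def k_def by simp
  then have "(nb_T \<beta> ^^ k) v = (nb_T \<beta> ^^ (k + (l + N - k))) (x / (- \<beta>) ^ l)"
    by (simp add: funpow_add)
  also have "\<dots> = (nb_T \<beta> ^^ l) ((nb_T \<beta> ^^ N) (x / (- \<beta>) ^ l))"
    using \<open>k \<le> l + N\<close> by (simp add: funpow_add)
  also have "\<dots> = 0"
    using N funpow_nb_T_0[OF assms(1)] by simp
  finally have "z \<in> Z_nb \<beta>"
    using Z_nb_iff_funpow_nb_T_eq_0[OF assms(1)] unfolding v_def k_def by blast
  then show ?thesis
    using Fin_nb_iff[OF assms(1)] unfolding z_def by blast
qed

section \<open>The ring \<open>\<int>[\<beta>]\<close> of a cubic integer \<open>\<beta>\<close>\<close>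

definition Z_beta :: "real \<Rightarrow> real set" where
  "Z_beta \<beta> = {of_int a + of_int b * \<beta> + of_int c * \<beta>\<^sup>2 | a b c. True}"

lemma Z_beta_of_int: "of_int a \<in> Z_beta \<beta>"
proof -
  have "of_int a = of_int a + of_int 0 * \<beta> + of_int 0 * \<beta>\<^sup>2"
    by simp
  then show ?thesis
    unfolding Z_beta_def by blast
qed

lemma Z_beta_add: "x \<in> Z_beta \<beta> \<Longrightarrow> y \<in> Z_beta \<beta> \<Longrightarrow> x + y \<in> Z_beta \<beta>"
proof -
  assume "x \<in> Z_beta \<beta>" "y \<in> Z_beta \<beta>"
  then obtain a b c a' b' c' where
    "x = of_int a + of_int b * \<beta> + of_int c * \<beta>\<^sup>2"
    "y = of_int a' + of_int b' * \<beta> + of_int c' * \<beta>\<^sup>2"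
    unfolding Z_beta_def by blast
  then have "x + y = of_int (a + a') + of_int (b + b') * \<beta> + of_int (c + c') * \<beta>\<^sup>2"
    by (simp add: algebra_simps)
  then show ?thesis
    unfolding Z_beta_def by blast
qed

lemma Z_beta_of_int_mult: "x \<in> Z_beta \<beta> \<Longrightarrow> of_int k * x \<in> Z_beta \<beta>"
proof -
  assume "x \<in> Z_beta \<beta>"
  then obtain a b c where "x = of_int a + of_int b * \<beta> + of_int c * \<beta>\<^sup>2"
    unfolding Z_beta_def by blast
  then have "of_int k * x = of_int (k * a) + of_int (k * b) * \<beta> + of_int (k * c) * \<beta>\<^sup>2"
    by (simp add: algebra_simps)
  then show ?thesis
    unfolding Z_beta_def by blast
qed

lemma Z_beta_uminus: "x \<in> Z_beta \<beta> \<Longrightarrow> - x \<in> Z_beta \<beta>"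
  using Z_beta_of_int_mult[of x \<beta> "-1"] by simp

lemma Z_beta_diff: "x \<in> Z_beta \<beta> \<Longrightarrow> y \<in> Z_beta \<beta> \<Longrightarrow> x - y \<in> Z_beta \<beta>"
  using Z_beta_add[of x \<beta> "- y"] Z_beta_uminus[of y \<beta>] by simp

lemma Z_beta_mult_beta:
  assumes cubic: "\<beta> ^ 3 = of_int p * \<beta>\<^sup>2 + of_int q * \<beta> + of_int r"
    and "x \<in> Z_beta \<beta>"
  shows "\<beta> * x \<in> Z_beta \<beta>"
proof -
  obtain a b c where x: "x = of_int a + of_int b * \<beta> + of_int c * \<beta>\<^sup>2"
    using assms(2) unfolding Z_beta_def by blast
  have "\<beta> * x = of_int a * \<beta> + of_int b * \<beta>\<^sup>2 + of_int c * \<beta> ^ 3"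
    unfolding x by (simp add: algebra_simps power2_eq_square power3_eq_cube)
  also have "\<dots> = of_int (c * r) + of_int (a + c * q) * \<beta> + of_int (b + c * p) * \<beta>\<^sup>2"
    unfolding cubic by (simp add: algebra_simps)
  finally show ?thesis
    unfolding Z_beta_def by blast
qed

lemma Z_beta_mult:
  assumes cubic: "\<beta> ^ 3 = of_int p * \<beta>\<^sup>2 + of_int q * \<beta> + of_int r"
    and "x \<in> Z_beta \<beta>" and "y \<in> Z_beta \<beta>"
  shows "x * y \<in> Z_beta \<beta>"
proof -
  obtain a b c where y: "y = of_int a + of_int b * \<beta> + of_int c * \<beta>\<^sup>2"
    using assms(3) unfolding Z_beta_def by blast
  have "x * y = of_int a * x + of_int b * (\<beta> * x) + of_int c * (\<beta> * (\<beta> * x))"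
    unfolding y by (simp add: algebra_simps power2_eq_square)
  then show ?thesis
    using Z_beta_add Z_beta_of_int_mult Z_beta_mult_beta[OF cubic] assms(2) by metis
qed

lemma Z_beta_power_minus_beta:
  assumes cubic: "\<beta> ^ 3 = of_int p * \<beta>\<^sup>2 + of_int q * \<beta> + of_int r"
  shows "(- \<beta>) ^ j \<in> Z_beta \<beta>"
proof (induction j)
  case 0
  show ?case
    using Z_beta_of_int[of 1 \<beta>] by simp
next
  case (Suc j)
  then show ?case
    using Z_beta_uminus Z_beta_mult_beta[OF cubic Suc] by (metis mult_minus_left power_Suc)
qed

lemma power_mult_minus_funpow_nb_T_mem_Z_beta:
  assumes cubic: "\<beta> ^ 3 = of_int p * \<beta>\<^sup>2 + of_int q * \<beta> + of_int r"
  shows "(- \<beta>) ^ j * y - (nb_T \<beta> ^^ j) y \<in> Z_beta \<beta>"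
proof (induction j)
  case 0
  show ?case
    using Z_beta_of_int[of 0 \<beta>] by simp
next
  case (Suc j)
  define w where "w = (nb_T \<beta> ^^ j) y"
  have "(- \<beta>) ^ Suc j * y - (nb_T \<beta> ^^ Suc j) y
        = - (\<beta> * ((- \<beta>) ^ j * y - w)) + of_int \<lfloor>- \<beta> * w - nb_ell \<beta>\<rfloor>"
    unfolding w_def by (simp add: nb_T_def algebra_simps)
  moreover have "\<beta> * ((- \<beta>) ^ j * y - w) \<in> Z_beta \<beta>"
    using Z_beta_mult_beta[OF cubic] Suc unfolding w_def by blast
  ultimately show ?case
    using Z_beta_add Z_beta_uminus Z_beta_of_int by metis
qed

lemma Z_nb_subset_Z_beta:
  assumes "\<beta> > 1" and cubic: "\<beta> ^ 3 = of_int p * \<beta>\<^sup>2 + of_int q * \<beta> + of_int r"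
  shows "Z_nb \<beta> \<subseteq> Z_beta \<beta>"
proof
  fix z
  assume "z \<in> Z_nb \<beta>"
  define k where "k = nb_k \<beta> z"
  define y where "y = z / (- \<beta>) ^ k"
  have "z = (- \<beta>) ^ k * y - (nb_T \<beta> ^^ k) y"
    using \<open>z \<in> Z_nb \<beta>\<close> Z_nb_iff_funpow_nb_T_eq_0[OF assms(1)] assms(1)
    unfolding y_def k_def by simp
  then show "z \<in> Z_beta \<beta>"
    using power_mult_minus_funpow_nb_T_mem_Z_beta[OF cubic] by simp
qed

section \<open>A hexagonal measure for a shift radix system\<close>

definition hex_norm :: "int \<Rightarrow> int \<Rightarrow> int" where
  "hex_norm x y = max \<bar>x\<bar> (max \<bar>y\<bar> \<bar>x - y\<bar>)"

text \<open>
  The position of \<open>(x, y)\<close> on the boundary of the hexagon \<open>hex_norm x y = h\<close>, numbered so that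
  the shift \<open>(x, y) \<mapsto> (s, x)\<close> below lowers it whenever it keeps the hexagonal norm.
\<close>

definition hex_rank :: "int \<Rightarrow> int \<Rightarrow> int \<Rightarrow> int" where
  "hex_rank h x y =
     (if x = h \<and> 0 \<le> y \<and> y < h then 7
      else if x = h \<and> y = h then 6
      else if y = h \<and> 0 < x \<and> x < h then 5
      else if x - y = - h \<and> x \<le> 0 \<and> 0 < y then 4
      else if x = - h \<and> - h < y \<and> y \<le> 0 then 3
      else if x = - h \<and> y = - h then 2
      else if y = - h \<and> - h < x \<and> x < 0 then 1
      else 0)"

definition hex_measure :: "int \<Rightarrow> int \<Rightarrow> nat" where
  "hex_measure x y = nat (8 * hex_norm x y + hex_rank (hex_norm x y) x y)"

lemma hex_rank_bounds: "0 \<le> hex_rank h x y \<and> hex_rank h x y \<le> 7"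
  unfolding hex_rank_def by auto

lemma hex_norm_bounds:
  "\<bar>x\<bar> \<le> hex_norm x y \<and> \<bar>y\<bar> \<le> hex_norm x y \<and> \<bar>x - y\<bar> \<le> hex_norm x y"
  unfolding hex_norm_def by auto

lemma hex_norm_attained:
  "\<bar>x\<bar> = hex_norm x y \<or> \<bar>y\<bar> = hex_norm x y \<or> \<bar>x - y\<bar> = hex_norm x y"
  unfolding hex_norm_def by (auto simp: max_def)

lemma hex_rank_shift_less:
  fixes h x y s :: int
  assumes "1 \<le> h" and "hex_norm x y = h" and "hex_norm s x = h"
    and "y = h \<Longrightarrow> s < h"
    and "x - y = - h \<Longrightarrow> x \<le> 0 \<Longrightarrow> s < h"
    and "y = - h \<Longrightarrow> - h < s"
    and "x - y = h \<Longrightarrow> 0 \<le> x \<Longrightarrow> x < h \<Longrightarrow> x - h < s \<and> s < h"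
  shows "hex_rank h s x < hex_rank h x y"
proof -
  have "\<bar>x\<bar> \<le> h" "\<bar>y\<bar> \<le> h" "\<bar>x - y\<bar> \<le> h" "\<bar>x\<bar> = h \<or> \<bar>y\<bar> = h \<or> \<bar>x - y\<bar> = h"
    using hex_norm_bounds[of x y] hex_norm_attained[of x y] assms(2) by auto
  moreover have "\<bar>s\<bar> \<le> h" "\<bar>s - x\<bar> \<le> h" "\<bar>s\<bar> = h \<or> \<bar>x\<bar> = h \<or> \<bar>s - x\<bar> = h"
    using hex_norm_bounds[of s x] hex_norm_attained[of s x] assms(3) by auto
  ultimately show ?thesis
    using assms(1,4-7) unfolding hex_rank_def abs_if by (smt (z3))
qed

lemma hex_measure_less:
  fixes x y s :: int
  assumes h: "1 \<le> hex_norm x y" and norm: "hex_norm s x \<le> hex_norm x y"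
    and "y = hex_norm x y \<Longrightarrow> s < hex_norm x y"
    and "x - y = - hex_norm x y \<Longrightarrow> x \<le> 0 \<Longrightarrow> s < hex_norm x y"
    and "y = - hex_norm x y \<Longrightarrow> - hex_norm x y < s"
    and "x - y = hex_norm x y \<Longrightarrow> 0 \<le> x \<Longrightarrow> x < hex_norm x y \<Longrightarrow>
      x - hex_norm x y < s \<and> s < hex_norm x y"
  shows "hex_measure s x < hex_measure x y"
proof (cases "hex_norm s x < hex_norm x y")
  case True
  then show ?thesis
    unfolding hex_measure_def
    using hex_rank_bounds[of "hex_norm s x" s x] hex_rank_bounds[of "hex_norm x y" x y] h by simp
next
  case False
  then have "hex_norm s x = hex_norm x y"
    using norm by simp
  moreover have "hex_rank (hex_norm x y) s x < hex_rank (hex_norm x y) x y"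
    using hex_rank_shift_less[OF h refl] assms(3-6) calculation by blast
  ultimately show ?thesis
    unfolding hex_measure_def using hex_rank_bounds[of "hex_norm x y" s x] h by simp
qed

text \<open>One step \<open>(x, y) \<mapsto> (s, x)\<close> of the shift radix system with parameters \<open>(a + b, -a)\<close>.\<close>

locale hex_shift =
  fixes a b p :: real and s x y :: int
  assumes a_pos: "0 < a" and b_pos: "0 < b" and b_less_p: "b < p" and a_add_p_le: "a + p \<le> 1"
    and p_le_half: "p \<le> 1 / 2"
    and lower: "p - 1 \<le> s - (a + b) * x + a * y" and upper: "s - (a + b) * x + a * y < p"
begin

abbreviation h :: int where "h \<equiv> hex_norm x y"

lemma mult_bounds:
  "- (a * h) \<le> a * x" "a * x \<le> a * h" "- (b * h) \<le> b * x" "b * x \<le> b * h"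
  "- ((1 - a - b) * h) \<le> (1 - a - b) * x" "(1 - a - b) * x \<le> (1 - a - b) * h"
  "- (a * h) \<le> a * y" "a * y \<le> a * h" "- (a * h) \<le> a * x - a * y" "a * x - a * y \<le> a * h"
proof -
  have bound: "- (k * h) \<le> k * z" "k * z \<le> k * h"
    if "0 \<le> k" "\<bar>z\<bar> \<le> real_of_int h" for k z :: real
    using that mult_left_mono[of z h k] mult_left_mono[of "- h" z k] by auto
  have "\<bar>real_of_int x\<bar> \<le> h" "\<bar>real_of_int y\<bar> \<le> h" "\<bar>real_of_int x - y\<bar> \<le> h"
    using hex_norm_bounds[of x y] by linarith+
  moreover have "0 \<le> a" "0 \<le> b" "0 \<le> 1 - a - b"
    using a_pos b_pos b_less_p a_add_p_le by simp_all
  moreover have "a * (real_of_int x - y) = a * x - a * y"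
    by (simp add: algebra_simps)
  ultimately show
    "- (a * h) \<le> a * x" "a * x \<le> a * h" "- (b * h) \<le> b * x" "b * x \<le> b * h"
    "- ((1 - a - b) * h) \<le> (1 - a - b) * x" "(1 - a - b) * x \<le> (1 - a - b) * h"
    "- (a * h) \<le> a * y" "a * y \<le> a * h" "- (a * h) \<le> a * x - a * y" "a * x - a * y \<le> a * h"
    using bound by metis+
qed

lemmas shift_linear_bounds = lower upper mult_bounds a_pos b_pos b_less_p a_add_p_le p_le_half

lemma le_mult_h:
  assumes "1 \<le> h"
  shows "a \<le> a * h" "b \<le> b * h" "1 - a - b \<le> (1 - a - b) * h"
  using assms mult_left_mono[of 1 "real_of_int h"] a_pos b_pos b_less_p a_add_p_le by auto

lemma mult_expand:
  "(a + b) * x = a * x + b * x" "(1 - a - b) * x = x - a * x - b * x"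
  "(1 - a - b) * h = h - a * h - b * h"
  by (simp_all add: algebra_simps)

lemma hex_norm_shift_le: "hex_norm s x \<le> h"
proof -
  have "real_of_int s < h + 1" "- h - 1 < real_of_int s"
    "real_of_int s - x < h + 1" "- h - 1 < real_of_int s - x"
    using shift_linear_bounds mult_expand by linarith+
  then have "\<bar>s\<bar> \<le> h" "\<bar>s - x\<bar> \<le> h"
    by linarith+
  then show ?thesis
    using hex_norm_bounds[of x y] unfolding hex_norm_def by simp
qed

lemma shift_less_if_y_eq:
  assumes "1 \<le> h" and "y = h"
  shows "s < h"
proof -
  have "real_of_int y = h"
    using assms(2) by simp
  then have "a * y = a * h"
    by simp
  then have "real_of_int s < h"
    using shift_linear_bounds mult_expand le_mult_h[OF assms(1)] by linarith
  then show ?thesis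
    by linarith
qed

lemma shift_less_if_diff_eq_minus:
  assumes "1 \<le> h" and "x - y = - h" and "x \<le> 0"
  shows "s < h"
proof -
  have "real_of_int x - y = - h"
    using assms(2) by (metis of_int_diff)
  then have "a * (real_of_int x - y) = - (a * h)"
    by simp
  then have "a * x - a * y = - (a * h)"
    by (simp add: right_diff_distrib)
  moreover have "b * x \<le> 0"
    using assms(3) b_pos by (simp add: mult_nonneg_nonpos)
  ultimately have "real_of_int s < 1"
    using shift_linear_bounds mult_expand by linarith
  then show ?thesis
    using assms(1) by linarith
qed

lemma shift_greater_if_y_eq_minus:
  assumes "1 \<le> h" and "y = - h"
  shows "- h < s"
proof -
  have "real_of_int y = - h"
    using assms(2) by metis
  then have "a * y = - (a * h)"
    by simp
  then have "- h < real_of_int s"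
    using shift_linear_bounds mult_expand le_mult_h[OF assms(1)] by linarith
  then show ?thesis
    by linarith
qed

lemma shift_between_if_diff_eq:
  assumes "x - y = h" and "0 \<le> x" and "x < h"
  shows "x - h < s \<and> s < h"
proof -
  have "real_of_int x - y = h"
    using assms(1) by (metis of_int_diff)
  then have "a * (real_of_int x - y) = a * h"
    by simp
  then have "a * x - a * y = a * h"
    by (simp add: right_diff_distrib)
  moreover have "0 \<le> b * x" "b * x \<le> b * h - b"
    using assms(2,3) b_pos mult_left_mono[of x "h - 1" b] by (simp_all add: algebra_simps)
  moreover have "1 \<le> h"
    using assms(2,3) by simp
  ultimately have "real_of_int x - h < s" "real_of_int s < h"
    using shift_linear_bounds mult_expand le_mult_h[OF \<open>1 \<le> h\<close>] assms(3) by linarith+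
  then show ?thesis
    by linarith
qed

lemma hex_measure_shift_less:
  assumes "(x, y) \<noteq> (0, 0)"
  shows "hex_measure s x < hex_measure x y"
proof -
  have "1 \<le> h"
    using assms unfolding hex_norm_def by auto
  then show ?thesis
    using shift_less_if_y_eq shift_less_if_diff_eq_minus shift_greater_if_y_eq_minus
      shift_between_if_diff_eq
    by (intro hex_measure_less[OF \<open>1 \<le> h\<close> hex_norm_shift_le]) blast+
qed

end

section \<open>The case \<open>n = m\<close>\<close>

lemma cubic_root_bounds:
  fixes \<beta> :: real and m :: nat
  assumes "\<beta> > 1" and "m \<ge> 1" and cubic: "\<beta> ^ 3 = m * \<beta>\<^sup>2 + m * \<beta> + m"
  shows "m * (\<beta> + 1) < \<beta>\<^sup>2" and "\<beta> - m = m / \<beta> + m / \<beta>\<^sup>2"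
proof -
  have "\<beta> * (\<beta>\<^sup>2 - m * \<beta> - m) = m"
    using cubic by (simp add: algebra_simps power2_eq_square power3_eq_cube)
  then have "0 < \<beta> * (\<beta>\<^sup>2 - m * \<beta> - m)"
    using assms(2) by simp
  then have "0 < \<beta>\<^sup>2 - m * \<beta> - m"
    using assms(1) by (simp add: zero_less_mult_iff)
  moreover have "m * (\<beta> + 1) = m * \<beta> + m"
    by (simp add: algebra_simps)
  ultimately show "m * (\<beta> + 1) < \<beta>\<^sup>2"
    by linarith
  have "\<beta>\<^sup>2 * (\<beta> - m) = m * \<beta> + m"
    using cubic by (simp add: algebra_simps power2_eq_square power3_eq_cube)
  then show "\<beta> - m = m / \<beta> + m / \<beta>\<^sup>2"
    using assms(1) by (simp add: field_simps power2_eq_square)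
qed

lemma cubic_root_shift_parameters:
  fixes \<beta> :: real and m :: nat
  assumes "\<beta> > 1" and "m \<ge> 1" and "\<beta> ^ 3 = m * \<beta>\<^sup>2 + m * \<beta> + m"
  shows "m / \<beta>\<^sup>2 < 1 / (\<beta> + 1)" and "m / \<beta> + 1 / (\<beta> + 1) \<le> 1"
    and "0 < m / \<beta>" and "0 < m / \<beta>\<^sup>2" and "1 / (\<beta> + 1) \<le> 1 / 2"
proof -
  note bound = cubic_root_bounds(1)[OF assms]
  show "m / \<beta>\<^sup>2 < 1 / (\<beta> + 1)"
    using assms(1) bound by (simp add: field_simps power2_eq_square)
  have "m / \<beta> < \<beta> / (\<beta> + 1)" "\<beta> / (\<beta> + 1) + 1 / (\<beta> + 1) = 1"
    using assms(1) bound by (simp_all add: field_simps power2_eq_square)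
  then show "m / \<beta> + 1 / (\<beta> + 1) \<le> 1"
    by linarith
  show "0 < m / \<beta>" "0 < m / \<beta>\<^sup>2" "1 / (\<beta> + 1) \<le> 1 / 2"
    using assms(1,2) by (simp_all add: field_simps)
qed

lemma nb_T_shift_coordinates:
  fixes \<beta> :: real and m :: nat and s r q :: int
  assumes "\<beta> > 1" and "\<beta> - m = m / \<beta> + m / \<beta>\<^sup>2"
  obtains s' :: int
  where "nb_T \<beta> (s - (\<beta> - m) * r + m / \<beta> * q) = s' - (\<beta> - m) * s + m / \<beta> * r"
proof -
  have key: "\<beta> * (\<beta> - m) = m + m / \<beta>"
    using assms by (simp add: field_simps power2_eq_square)
  have "- \<beta> * (s - (\<beta> - m) * r + m / \<beta> * q)
      = - \<beta> * s + (\<beta> * (\<beta> - m)) * r - (\<beta> * (m / \<beta>)) * q"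
    by (simp add: algebra_simps)
  also have "\<dots> = - \<beta> * s + (m + m / \<beta>) * r - m * q"
    using key assms(1) by simp
  finally have "- \<beta> * (s - (\<beta> - m) * r + m / \<beta> * q) = - (m * (s - r + q)) - (\<beta> - m) * s + m / \<beta> * r"
    by (simp add: algebra_simps)
  then have "nb_T \<beta> (s - (\<beta> - m) * r + m / \<beta> * q) =
      of_int (- (m * (s - r + q)) - \<lfloor>- \<beta> * (s - (\<beta> - m) * r + m / \<beta> * q) - nb_ell \<beta>\<rfloor>)
      - (\<beta> - m) * s + m / \<beta> * r"
    unfolding nb_T_def by simp
  then show ?thesis
    using that by blast
qed

lemma nb_finite_orbit_coordinates:
  fixes \<beta> :: real and m :: nat and s r q :: int
  assumes "\<beta> > 1" and "m \<ge> 1" and "\<beta> ^ 3 = m * \<beta>\<^sup>2 + m * \<beta> + m"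
  shows "nb_finite_orbit \<beta> (s - (\<beta> - m) * r + m / \<beta> * q)"
proof (induction "hex_measure s r" arbitrary: s r q rule: less_induct)
  case less
  define a b p where "a = m / \<beta>" and "b = m / \<beta>\<^sup>2" and "p = 1 / (\<beta> + 1)"
  note root = cubic_root_bounds[OF assms]
  have param: "a > 0" "b > 0" "b < p" "a + p \<le> 1" "p \<le> 1 / 2" "0 < p"
    using cubic_root_shift_parameters[OF assms] assms(1) unfolding a_def b_def p_def by auto
  obtain s' :: int where T: "nb_T \<beta> (s - (\<beta> - m) * r + m / \<beta> * q) = s' - (\<beta> - m) * s + m / \<beta> * r"
    using nb_T_shift_coordinates[OF assms(1) root(2)] .
  have "nb_T \<beta> (s - (\<beta> - m) * r + m / \<beta> * q) = s' - (a + b) * s + a * r"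
    using T by (simp add: a_def b_def root(2))
  then have shift: "p - 1 \<le> s' - (a + b) * s + a * r" "s' - (a + b) * s + a * r < p"
    using nb_T_bounds[of \<beta> "s - (\<beta> - m) * r + m / \<beta> * q"] nb_ell_add_1[OF assms(1)]
    unfolding p_def by auto
  show ?case
  proof (cases "s = 0 \<and> r = 0")
    case True
    then have "- 1 < real_of_int s'" "real_of_int s' < 1"
      using shift param by auto
    then have "s' = 0"
      by linarith
    then have "(nb_T \<beta> ^^ 1) (s - (\<beta> - m) * r + m / \<beta> * q) = 0"
      using T True by simp
    then show ?thesis
      unfolding nb_finite_orbit_def by blast
  next
    case False
    have "hex_shift a b p s' s r"
      using param shift by unfold_locales
    then have "hex_measure s' s < hex_measure s r"
      using False by (intro hex_shift.hex_measure_shift_less) auto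
    then have "nb_finite_orbit \<beta> ((nb_T \<beta> ^^ 1) (s - (\<beta> - m) * r + m / \<beta> * q))"
      using less T by simp
    then show ?thesis
      using nb_finite_orbit_funpow_iff[OF assms(1)] by blast
  qed
qed

lemma nb_finite_orbit_Z_beta:
  fixes \<beta> :: real and m :: nat
  assumes "\<beta> > 1" and "m \<ge> 1" and "\<beta> ^ 3 = m * \<beta>\<^sup>2 + m * \<beta> + m"
    and "u \<in> Z_beta \<beta>"
  shows "nb_finite_orbit \<beta> u"
proof -
  obtain a b c where u: "u = of_int a + of_int b * \<beta> + of_int c * \<beta>\<^sup>2"
    using assms(4) unfolding Z_beta_def by blast
  have "\<beta>\<^sup>2 = m * \<beta> + m + m / \<beta>"
    using cubic_root_bounds(2)[OF assms(1-3)] assms(1) by (simp add: field_simps power2_eq_square)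
  then have "u = of_int (a + b * m + c * m + c * m * m) - (\<beta> - m) * of_int (- (b + c * m))
      + m / \<beta> * of_int c"
    unfolding u by (simp add: algebra_simps)
  then show ?thesis
    by (simp only: nb_finite_orbit_coordinates[OF assms(1-3)])
qed

lemma Fin_nb_divide_power:
  assumes "\<beta> > 1" and "x \<in> Fin_nb \<beta>"
  shows "x / (- \<beta>) ^ i \<in> Fin_nb \<beta>"
proof -
  obtain j where "(- \<beta>) ^ j * x \<in> Z_nb \<beta>"
    using assms Fin_nb_iff by blast
  moreover have "(- \<beta>) ^ (j + i) * (x / (- \<beta>) ^ i) = (- \<beta>) ^ j * x"
    using assms(1) by (simp add: power_add)
  ultimately show ?thesis
    using Fin_nb_iff[OF assms(1)] by metis
qed

lemma Z_beta_subset_Fin_nb: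
  fixes \<beta> :: real and m :: nat
  assumes "\<beta> > 1" and "m \<ge> 1" and cubic: "\<beta> ^ 3 = m * \<beta>\<^sup>2 + m * \<beta> + m"
  shows "Z_beta \<beta> \<subseteq> Fin_nb \<beta>"
proof
  fix w
  assume w: "w \<in> Z_beta \<beta>"
  have cubic': "\<beta> ^ 3 = of_int (int m) * \<beta>\<^sup>2 + of_int (int m) * \<beta> + of_int (int m)"
    using cubic by simp
  define v where "v = w / (- \<beta>) ^ nb_k \<beta> w"
  have "(- \<beta>) ^ nb_k \<beta> w * v - (nb_T \<beta> ^^ nb_k \<beta> w) v \<in> Z_beta \<beta>"
    by (rule power_mult_minus_funpow_nb_T_mem_Z_beta[OF cubic'])
  then have "(nb_T \<beta> ^^ nb_k \<beta> w) v \<in> Z_beta \<beta>"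
    using Z_beta_diff[OF w] assms(1) unfolding v_def by fastforce
  then have "nb_finite_orbit \<beta> v"
    using nb_finite_orbit_Z_beta[OF assms] nb_finite_orbit_funpow_iff[OF assms(1)] by blast
  then show "w \<in> Fin_nb \<beta>"
    unfolding v_def by (rule mem_Fin_nb_if_nb_finite_orbit[OF assms(1) nb_k_mem[OF assms(1)]])
qed

lemma Fin_nb_eq_Z_beta_divide_powers:
  fixes \<beta> :: real and m :: nat
  assumes "\<beta> > 1" and "m \<ge> 1" and cubic: "\<beta> ^ 3 = m * \<beta>\<^sup>2 + m * \<beta> + m"
  shows "Fin_nb \<beta> = {x. \<exists>i. (- \<beta>) ^ i * x \<in> Z_beta \<beta>}"
proof (intro set_eqI iffI)
  fix x
  assume "x \<in> Fin_nb \<beta>"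
  moreover have "Z_nb \<beta> \<subseteq> Z_beta \<beta>"
    by (rule Z_nb_subset_Z_beta[OF assms(1), of "int m" "int m" "int m"]) (use cubic in simp)
  ultimately show "x \<in> {x. \<exists>i. (- \<beta>) ^ i * x \<in> Z_beta \<beta>}"
    using Fin_nb_iff[OF assms(1)] by blast
next
  fix x
  assume "x \<in> {x. \<exists>i. (- \<beta>) ^ i * x \<in> Z_beta \<beta>}"
  then obtain i where "(- \<beta>) ^ i * x \<in> Fin_nb \<beta>"
    using Z_beta_subset_Fin_nb[OF assms] by blast
  then have "((- \<beta>) ^ i * x) / (- \<beta>) ^ i \<in> Fin_nb \<beta>"
    by (rule Fin_nb_divide_power[OF assms(1)])
  then show "x \<in> Fin_nb \<beta>"
    using assms(1) by simp
qed

lemma is_ring_set_Fin_nb: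
  fixes \<beta> :: real and m :: nat
  assumes "\<beta> > 1" and "m \<ge> 1" and cubic: "\<beta> ^ 3 = m * \<beta>\<^sup>2 + m * \<beta> + m"
  shows "is_ring_set (Fin_nb \<beta>)"
proof -
  have cubic': "\<beta> ^ 3 = of_int (int m) * \<beta>\<^sup>2 + of_int (int m) * \<beta> + of_int (int m)"
    using cubic by simp
  note Z_beta_ring = Z_beta_add Z_beta_uminus Z_beta_mult[OF cubic'] Z_beta_power_minus_beta[OF cubic']
  have "x + y \<in> Fin_nb \<beta> \<and> x * y \<in> Fin_nb \<beta>" if xy: "x \<in> Fin_nb \<beta>" "y \<in> Fin_nb \<beta>" for x y
  proof -
    obtain i j where "(- \<beta>) ^ i * x \<in> Z_beta \<beta>" "(- \<beta>) ^ j * y \<in> Z_beta \<beta>"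
      using xy Fin_nb_eq_Z_beta_divide_powers[OF assms] by blast
    moreover have "(- \<beta>) ^ (i + j) * (x + y) = (- \<beta>) ^ j * ((- \<beta>) ^ i * x) + (- \<beta>) ^ i * ((- \<beta>) ^ j * y)"
      "(- \<beta>) ^ (i + j) * (x * y) = ((- \<beta>) ^ i * x) * ((- \<beta>) ^ j * y)"
      by (simp_all add: power_add algebra_simps)
    ultimately show ?thesis
      unfolding Fin_nb_eq_Z_beta_divide_powers[OF assms] using Z_beta_ring by (metis mem_Collect_eq)
  qed
  moreover have "- x \<in> Fin_nb \<beta>" if "x \<in> Fin_nb \<beta>" for x
    using that Z_beta_uminus unfolding Fin_nb_eq_Z_beta_divide_powers[OF assms] by fastforce
  ultimately show ?thesis
    unfolding is_ring_set_def by blast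
qed

section \<open>The case \<open>n < m\<close>\<close>

lemma one_mem_Fin_nb:
  assumes "\<beta> \<ge> 2"
  shows "1 \<in> Fin_nb \<beta>"
proof -
  have "\<beta> > 1"
    using assms by simp
  have "2 * \<beta> \<le> \<beta> * \<beta>"
    using assms by (simp add: mult_right_mono)
  then have "\<beta> + 1 < \<beta> * \<beta>"
    using assms by linarith
  then have mem: "1 / (- \<beta>) ^ 1 \<in> {nb_ell \<beta> <..< nb_ell \<beta> + 1}"
    using \<open>\<beta> > 1\<close> nb_ell_add_1[OF \<open>\<beta> > 1\<close>] by (simp add: nb_ell_def field_simps)
  have "nb_T \<beta> (1 / - \<beta>) = 0"
    using \<open>\<beta> > 1\<close> nb_ell_bounds[OF \<open>\<beta> > 1\<close>] nb_T_eq_iff_floor[of \<beta> "1 / - \<beta>" 1]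
    by (simp add: floor_eq_iff)
  then have "nb_finite_orbit \<beta> (1 / (- \<beta>) ^ 1)"
    unfolding nb_finite_orbit_def by (intro exI[of _ 1]) simp
  with mem show ?thesis
    by (rule mem_Fin_nb_if_nb_finite_orbit[OF \<open>\<beta> > 1\<close>])
qed

lemma nb_T_fixed_point:
  fixes \<beta> :: real and d :: nat
  assumes "\<beta> > 1" and "d \<le> \<beta>"
  shows "nb_T \<beta> (- real d / (\<beta> + 1)) = - real d / (\<beta> + 1)"
proof -
  have "\<beta> + 1 \<noteq> 0"
    using assms(1) by simp
  have "- \<beta> * (- real d / (\<beta> + 1)) - nb_ell \<beta> = (\<beta> * d + \<beta>) / (\<beta> + 1)"
    unfolding nb_ell_def by (simp add: add_divide_distrib)
  also have "\<dots> = d + (\<beta> - d) / (\<beta> + 1)"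
    using \<open>\<beta> + 1 \<noteq> 0\<close> by (simp add: field_simps)
  finally have "- \<beta> * (- real d / (\<beta> + 1)) - nb_ell \<beta> = d + (\<beta> - d) / (\<beta> + 1)" .
  moreover have "0 \<le> (\<beta> - d) / (\<beta> + 1)" "(\<beta> - d) / (\<beta> + 1) < 1"
    using assms by (simp_all add: field_simps)
  ultimately have "\<lfloor>- \<beta> * (- real d / (\<beta> + 1)) - nb_ell \<beta>\<rfloor> = int d"
    by (simp add: floor_eq_iff)
  moreover have "- \<beta> * (- real d / (\<beta> + 1)) - real_of_int (int d) = - real d / (\<beta> + 1)"
    using assms(1) by (simp add: field_simps)
  ultimately show ?thesis
    using nb_T_eq_iff_floor by metis
qed

lemma cubic_root_between:
  fixes m n :: nat and \<beta> :: real
  assumes "1 \<le> n" and "n \<le> m" and "\<beta> > 1"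
    and cubic: "\<beta> ^ 3 - real m * \<beta> ^ 2 - real m * \<beta> - real n = 0"
  shows "0 < \<beta>\<^sup>2 - m * \<beta> - m" and "m < \<beta>" and "\<beta> < m + 1"
proof -
  have "\<beta> * (\<beta>\<^sup>2 - m * \<beta> - m) = n"
    using cubic by (simp add: algebra_simps power2_eq_square power3_eq_cube)
  then have "0 < \<beta> * (\<beta>\<^sup>2 - m * \<beta> - m)"
    using assms(1) by simp
  then show "0 < \<beta>\<^sup>2 - m * \<beta> - m"
    using assms(3) by (simp add: zero_less_mult_iff)
  have eq: "\<beta>\<^sup>2 * (\<beta> - m) = m * \<beta> + n"
    using cubic by (simp add: algebra_simps power2_eq_square power3_eq_cube)
  moreover have "0 < m * \<beta> + n"
    using assms(1,3) by (simp add: add_nonneg_pos)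
  ultimately have "0 < \<beta>\<^sup>2 * (\<beta> - m)"
    by linarith
  then show "m < \<beta>"
    by (simp add: zero_less_mult_iff)
  show "\<beta> < m + 1"
  proof (rule ccontr)
    assume "\<not> \<beta> < m + 1"
    then have "\<beta>\<^sup>2 * 1 \<le> \<beta>\<^sup>2 * (\<beta> - m)" "(m + 1) * \<beta> \<le> \<beta> * \<beta>" "n < \<beta>"
      using assms(2,3) by (simp_all add: mult_left_mono mult_right_mono)
    then show False
      using eq by (simp add: algebra_simps power2_eq_square)
  qed
qed

lemma nb_T_minus_inverse_square:
  assumes "\<beta> > 1"
  shows "nb_T \<beta> (- 1 / \<beta>\<^sup>2) = 1 / \<beta> - 1"
proof -
  have "- \<beta> * (- 1 / \<beta>\<^sup>2) - nb_ell \<beta> = 1 / \<beta> + \<beta> / (\<beta> + 1)"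
    using assms by (simp add: nb_ell_def power2_eq_square)
  moreover have "1 / (\<beta> + 1) + \<beta> / (\<beta> + 1) = 1" "\<beta> / (\<beta> + 1) < 1" "1 / \<beta> < 1"
    "1 / (\<beta> + 1) \<le> 1 / \<beta>"
    using assms by (simp_all add: field_simps)
  ultimately have "\<lfloor>- \<beta> * (- 1 / \<beta>\<^sup>2) - nb_ell \<beta>\<rfloor> = 1"
    by (simp add: floor_eq_iff)
  then have "nb_T \<beta> (- 1 / \<beta>\<^sup>2) = - \<beta> * (- 1 / \<beta>\<^sup>2) - of_int 1"
    by (simp only: nb_T_eq_iff_floor)
  then show ?thesis
    using assms by (simp add: power2_eq_square)
qed

lemma nb_T_inverse_minus_1:
  fixes m n :: nat and \<beta> :: real
  assumes "1 \<le> n" and "n \<le> m" and "\<beta> > 1"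
    and "\<beta> ^ 3 - real m * \<beta> ^ 2 - real m * \<beta> - real n = 0"
  shows "nb_T \<beta> (1 / \<beta> - 1) = \<beta> - 1 - m"
proof -
  note root = cubic_root_between[OF assms]
  have "(\<beta> - 1 - m) * (\<beta> + 1) + \<beta> = (\<beta>\<^sup>2 - m * \<beta> - m) + (\<beta> - 1)"
    by (simp add: algebra_simps power2_eq_square)
  then have "m \<le> \<beta> - 1 + \<beta> / (\<beta> + 1)"
    using root(1) assms(3) by (simp add: field_simps)
  moreover have "- \<beta> * (1 / \<beta> - 1) - nb_ell \<beta> = \<beta> - 1 + \<beta> / (\<beta> + 1)"
    using assms(3) by (simp add: nb_ell_def algebra_simps)
  moreover have "\<beta> / (\<beta> + 1) < 1"
    using assms(3) by simp
  ultimately have "\<lfloor>- \<beta> * (1 / \<beta> - 1) - nb_ell \<beta>\<rfloor> = int m"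
    using root(3) by (simp add: floor_eq_iff)
  then have "nb_T \<beta> (1 / \<beta> - 1) = - \<beta> * (1 / \<beta> - 1) - of_int (int m)"
    by (simp only: nb_T_eq_iff_floor)
  then show ?thesis
    using assms(3) by (simp add: algebra_simps)
qed

lemma nb_T_beta_minus_1_minus_m:
  fixes m n :: nat and \<beta> :: real
  assumes "1 \<le> n" and "n < m" and "\<beta> > 1"
    and cubic: "\<beta> ^ 3 - real m * \<beta> ^ 2 - real m * \<beta> - real n = 0"
  shows "nb_T \<beta> (\<beta> - 1 - m) = - real (n + 1) / (\<beta> + 1)"
proof -
  define p where "p = - real (n + 1) / (\<beta> + 1)"
  have "(- \<beta> * (\<beta> - 1 - m) - 1) * (\<beta> + 1) = - (\<beta> ^ 3) + m * \<beta>\<^sup>2 + m * \<beta> - 1"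
    by (simp add: algebra_simps power2_eq_square power3_eq_cube)
  also have "\<dots> = p * (\<beta> + 1)"
    using cubic assms(3) unfolding p_def by simp
  finally have p: "- \<beta> * (\<beta> - 1 - m) - 1 = p"
    using assms(3) by simp
  have "p + \<beta> / (\<beta> + 1) = (\<beta> - real (n + 1)) / (\<beta> + 1)"
    unfolding p_def by (simp add: diff_divide_distrib add_divide_distrib)
  then have "0 \<le> p + \<beta> / (\<beta> + 1)" "p + \<beta> / (\<beta> + 1) < 1"
    using cubic_root_between(2)[OF assms(1) less_imp_le[OF assms(2)] assms(3,4)] assms(2,3)
    by (simp_all add: divide_less_eq)
  then have "\<lfloor>- \<beta> * (\<beta> - 1 - m) - nb_ell \<beta>\<rfloor> = 1"
    using p by (simp add: nb_ell_def floor_eq_iff)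
  then have "nb_T \<beta> (\<beta> - 1 - m) = - \<beta> * (\<beta> - 1 - m) - of_int 1"
    by (simp only: nb_T_eq_iff_floor)
  then show ?thesis
    using p unfolding p_def by simp
qed

lemma funpow_nb_T_minus_inverse_square:
  fixes m n :: nat and \<beta> :: real
  assumes "1 \<le> n" and "n < m" and "\<beta> > 1"
    and "\<beta> ^ 3 - real m * \<beta> ^ 2 - real m * \<beta> - real n = 0"
  shows "(nb_T \<beta> ^^ 3) (- 1 / \<beta>\<^sup>2) = - real (n + 1) / (\<beta> + 1)"
  using nb_T_minus_inverse_square[OF assms(3)] nb_T_inverse_minus_1[OF assms(1) _ assms(3,4)]
    nb_T_beta_minus_1_minus_m[OF assms] assms(2)
  by (simp add: numeral_3_eq_3)

lemma minus_inverse_square_mem: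
  assumes "\<beta> \<ge> 2"
  shows "- 1 / (- \<beta>) ^ 2 \<in> {nb_ell \<beta> <..< nb_ell \<beta> + 1}"
proof -
  have "2 * \<beta> \<le> \<beta> * \<beta>" "2 * (\<beta> * \<beta>) \<le> \<beta> * \<beta> * \<beta>"
    using assms by (simp_all add: mult_right_mono)
  then have "\<beta> + 1 < \<beta> * \<beta> * \<beta>"
    using assms by linarith
  then have "- (\<beta> / (\<beta> + 1)) < - 1 / \<beta>\<^sup>2"
    using assms by (simp add: field_simps power2_eq_square)
  moreover have "- 1 / \<beta>\<^sup>2 < 0" "0 < 1 / (\<beta> + 1)"
    using assms by simp_all
  ultimately have "nb_ell \<beta> < - 1 / \<beta>\<^sup>2 \<and> - 1 / \<beta>\<^sup>2 < nb_ell \<beta> + 1"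
    using nb_ell_add_1[of \<beta>] nb_ell_def[of \<beta>] assms by linarith
  then show ?thesis
    by simp
qed

lemma not_nb_finite_orbit_fixed_point:
  assumes "nb_T \<beta> p = p" and "p \<noteq> 0"
  shows "\<not> nb_finite_orbit \<beta> p"
proof -
  have "(nb_T \<beta> ^^ N) p = p" for N
    using assms(1) by (induction N) simp_all
  then show ?thesis
    unfolding nb_finite_orbit_def using assms(2) by simp
qed

lemma minus_one_not_mem_Fin_nb:
  fixes m n :: nat and \<beta> :: real
  assumes "1 \<le> n" and "n < m" and "\<beta> > 1"
    and "\<beta> ^ 3 - real m * \<beta> ^ 2 - real m * \<beta> - real n = 0"
  shows "- 1 \<notin> Fin_nb \<beta>"
proof
  assume "- 1 \<in> Fin_nb \<beta>"
  have "m < \<beta>"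
    using cubic_root_between[OF assms(1) less_imp_le[OF assms(2)] assms(3,4)] by simp
  then have "\<beta> \<ge> 2"
    using assms(1,2) by linarith
  then have "nb_finite_orbit \<beta> (- 1 / (- \<beta>) ^ 2)"
    using \<open>- 1 \<in> Fin_nb \<beta>\<close> minus_inverse_square_mem nb_finite_orbit_if_mem_Fin_nb[OF assms(3)]
    by blast
  then have "nb_finite_orbit \<beta> (- 1 / \<beta>\<^sup>2)"
    by simp
  then have "nb_finite_orbit \<beta> (- real (n + 1) / (\<beta> + 1))"
    using nb_finite_orbit_funpow_iff[OF assms(3), of 3] funpow_nb_T_minus_inverse_square[OF assms]
    by metis
  moreover have "nb_T \<beta> (- real (n + 1) / (\<beta> + 1)) = - real (n + 1) / (\<beta> + 1)"
    using \<open>m < \<beta>\<close> assms(2) by (intro nb_T_fixed_point[OF assms(3)]) simp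
  moreover have "- real (n + 1) / (\<beta> + 1) \<noteq> 0"
    using assms(3) by simp
  ultimately show False
    using not_nb_finite_orbit_fixed_point by blast
qed

theorem theorem3:
  fixes m n :: nat and \<beta> :: real
  assumes "1 \<le> n" and "n \<le> m"
    and "\<beta> > 1"
    and "\<beta> ^ 3 - real m * \<beta> ^ 2 - real m * \<beta> - real n = 0"
  shows "is_ring_set (Fin_nb \<beta>) \<longleftrightarrow> n = m"
proof
  assume ring: "is_ring_set (Fin_nb \<beta>)"
  show "n = m"
  proof (rule ccontr)
    assume "n \<noteq> m"
    with assms(2) have "n < m"
      by simp
    have "m < \<beta>"
      using cubic_root_between[OF assms] by simp
    then have "1 \<in> Fin_nb \<beta>"
      using \<open>n < m\<close> assms(1) by (intro one_mem_Fin_nb) linarith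
    then have "- 1 \<in> Fin_nb \<beta>"
      using ring unfolding is_ring_set_def by blast
    then show False
      using minus_one_not_mem_Fin_nb[OF assms(1) \<open>n < m\<close> assms(3,4)] by contradiction
  qed
next
  assume "n = m"
  then have "\<beta> ^ 3 = m * \<beta>\<^sup>2 + m * \<beta> + m"
    using assms(4) by simp
  then show "is_ring_set (Fin_nb \<beta>)"
    using is_ring_set_Fin_nb[OF assms(3)] assms(1) \<open>n = m\<close> by simp
qed

end
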